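(* Let $n,m\ge 1$, let $\mathbf y\in\{0,1\}^n$ be fixed training labels, let $\Psi\in\mathbb R^{m\times n}$ be a feature matrix, and let $\mathrm{metric}$ be of the form $$\mathrm{metric}(\hat{\mathbf y},\check{\mathbf y})=\sum_{j=1}^{J}\frac{a_j\,\mathrm{TP}+b_j\,\mathrm{TN}+f_j(\mathrm{PP},\mathrm{AP})}{g_j(\mathrm{PP},\mathrm{AP})}.$$ Then $$\max_{\theta\in\mathbb R^m}\ \min_{\mathcal Q}\ \max_{\mathcal P}\ \mathbb E_{\hat{\mathbf Y}\sim\mathcal P,\check{\mathbf Y}\sim\mathcal Q}\Big[\mathrm{metric}(\hat{\mathbf Y},\check{\mathbf Y})-\theta^\top\big(\Psi\check{\mathbf Y}-\Psi\mathbf y\big)\Big]$$ (where $\mathcal P,\mathcal Q$ range over all probability distributions on $\{0,1\}^n$ and $\hat{\mathbf Y},\check{\mathbf Y}$ are independent) is equal to $$\max_{\theta\in\mathbb R^m}\Big\{\min_{\mathbf Q\in\Delta}\max_{\mathbf P\in\Delta}\Big[\sum_{k=0}^n\sum_{l=0}^n\sum_{j=1}^J\frac{1}{g_j(k,l)}\Big\{a_j[\mathbf p_k^1\cdot\mathbf q_l^1]+b_j[\mathbf p_k^0\cdot\mathbf q_l^0]+f_j(k,l)r_ks_l\Big\}-\langle\mathbf Q^\top\mathbf 1,\Psi^\top\theta\rangle\Big]+\langle\mathbf y,\Psi^\top\theta\rangle\Big\}.$$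
   Context: For $\hat{\mathbf y},\check{\mathbf y}\in\{0,1\}^n$: $\mathrm{TP}=\sum_i\hat y_i\check y_i$, $\mathrm{TN}=\sum_i(1-\hat y_i)(1-\check y_i)$, $\mathrm{PP}=\sum_i\hat y_i$, $\mathrm{AP}=\sum_i\check y_i$; $a_j,b_j\in\mathbb R$ and $f_j,g_j:\{0,\dots,n\}^2\to\mathbb R$ with $g_j$ never zero. Features: the feature of the whole label vector is $\phi(\mathbf x,\mathbf y)=\sum_i\phi(x_i,y_i)$ with $\phi(x_i,0)=0$, and the $i$-th column of $\Psi$ is $\phi(x_i,1)\in\mathbb R^m$, so $\phi(\mathbf x,\mathbf y)=\Psi\mathbf y$. The set $\Delta\subset\mathbb R^{n\times n}$ (entries $p_{i,k}$, $i,k\in\{1,\dots,n\}$) is $$\Delta=\Big\{\mathbf P:\ p_{i,k}\ge 0\ \forall i,k;\ \ p_{i,k}\le\tfrac1k\textstyle\sum_{j}p_{j,k}\ \forall i,k;\ \ \sum_k\tfrac1k\sum_ip_{i,k}\le 1\Big\}.$$ From $\mathbf P\in\Delta$ one defines: $\mathbf p_k^1=\mathbf P_{(:,k)}$ for $k\ge1$ and $\mathbf p_0^1=\mathbf 0$; $r_k=\frac1k\mathbf 1^\top\mathbf p_k^1$ for $k\ge1$ and $r_0=1-\sum_{k=1}^n r_k$; $\mathbf p_k^0=r_k\mathbf 1-\mathbf p_k^1$ for $k\in\{0,\dots,n\}$. The quantities $\mathbf q_l^1,\mathbf q_l^0,s_l$ are defined from $\mathbf Q$ in the same way. (These represent $(\mathbf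 p_k^a)_i=\mathcal P(\hat Y_i=a,\sum\hat Y=k)$ and $r_k=\mathcal P(\sum\hat Y=k)$.) *)

theory Defs
  imports "HOL-Analysis.Analysis"
begin

text \<open>Label vectors in {0,1}^n, with n = CARD('n) items indexed by the finite type 'n.\<close>
definition labels :: "(real^'n) set" where
  "labels = {v. \<forall>i. v $ i \<in> {0, 1}}"

text \<open>Confusion-matrix counts (as natural numbers, so that f_j, g_j take arguments in {0..n}).\<close>
definition TP :: "real^'n \<Rightarrow> real^'n \<Rightarrow> nat" where
  "TP yh yc = card {i. yh $ i = 1 \<and> yc $ i = 1}"
definition TN :: "real^'n \<Rightarrow> real^'n \<Rightarrow> nat" where
  "TN yh yc = card {i. yh $ i = 0 \<and> yc $ i = 0}"
definition PP :: "real^'n \<Rightarrow> nat" where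
  "PP yh = card {i. yh $ i = 1}"
definition AP :: "real^'n \<Rightarrow> nat" where
  "AP yc = card {i. yc $ i = 1}"

definition metric ::
  "nat \<Rightarrow> (nat \<Rightarrow> real) \<Rightarrow> (nat \<Rightarrow> real) \<Rightarrow> (nat \<Rightarrow> nat \<Rightarrow> nat \<Rightarrow> real)
   \<Rightarrow> (nat \<Rightarrow> nat \<Rightarrow> nat \<Rightarrow> real) \<Rightarrow> real^'n \<Rightarrow> real^'n \<Rightarrow> real" where
  "metric J a b f g yh yc =
     (\<Sum>j=1..J. (a j * real (TP yh yc) + b j * real (TN yh yc) + f j (PP yh) (AP yc))
                 / g j (PP yh) (AP yc))"

definition distribs :: "(real^'n \<Rightarrow> real) set" where
  "distribs = {P. (\<forall>v. 0 \<le> P v) \<and> (\<forall>v. v \<notin> labels \<longrightarrow> P v = 0)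
                 \<and> (\<Sum>v\<in>labels. P v) = 1}"

definition expect2 :: "(real^'n \<Rightarrow> real) \<Rightarrow> (real^'n \<Rightarrow> real)
     \<Rightarrow> (real^'n \<Rightarrow> real^'n \<Rightarrow> real) \<Rightarrow> real" where
  "expect2 P Q h = (\<Sum>yh\<in>labels. \<Sum>yc\<in>labels. P yh * Q yc * h yh yc)"

text \<open>The set Delta of n x n matrices; entry p_{i,k} is P i k with i an item and
  k in {1..n}; entries with k outside {1..n} are fixed to 0.\<close>
definition Delta :: "('n::finite \<Rightarrow> nat \<Rightarrow> real) set" where
  "Delta = {P. (\<forall>i k. 0 \<le> P i k)
              \<and> (\<forall>i k. k \<notin> {1..CARD('n)} \<longrightarrow> P i k = 0)
              \<and> (\<forall>i k. k \<in> {1..CARD('n)} \<longrightarrow> P i k \<le> (1 / real k) * (\<Sum>j\<in>UNIV. P j k))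
              \<and> (\<Sum>k=1..CARD('n). (1 / real k) * (\<Sum>i\<in>UNIV. P i k)) \<le> 1}"

text \<open>p_k^1 (with p_0^1 = 0), r_k (with r_0 = 1 - sum r_k), and p_k^0 = r_k 1 - p_k^1.\<close>
definition p1 :: "('n::finite \<Rightarrow> nat \<Rightarrow> real) \<Rightarrow> nat \<Rightarrow> 'n \<Rightarrow> real" where
  "p1 P k i = (if k = 0 then 0 else P i k)"

definition rk :: "('n::finite \<Rightarrow> nat \<Rightarrow> real) \<Rightarrow> nat \<Rightarrow> real" where
  "rk P k = (if k = 0 then 1 - (\<Sum>k'=1..CARD('n). (1 / real k') * (\<Sum>i\<in>UNIV. P i k'))
             else (1 / real k) * (\<Sum>i\<in>UNIV. P i k))"

definition p0 :: "('n::finite \<Rightarrow> nat \<Rightarrow> real) \<Rightarrow> nat \<Rightarrow> 'n \<Rightarrow> real" where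
  "p0 P k i = rk P k - p1 P k i"

definition dotv :: "('n::finite \<Rightarrow> real) \<Rightarrow> ('n \<Rightarrow> real) \<Rightarrow> real" where
  "dotv u v = (\<Sum>i\<in>UNIV. u i * v i)"

definition marginal_payoff ::
  "nat \<Rightarrow> (nat \<Rightarrow> real) \<Rightarrow> (nat \<Rightarrow> real) \<Rightarrow> (nat \<Rightarrow> nat \<Rightarrow> nat \<Rightarrow> real)
   \<Rightarrow> (nat \<Rightarrow> nat \<Rightarrow> nat \<Rightarrow> real) \<Rightarrow> ('n::finite \<Rightarrow> nat \<Rightarrow> real) \<Rightarrow> ('n \<Rightarrow> nat \<Rightarrow> real) \<Rightarrow> real" where
  "marginal_payoff J a b f g P Q =
     (\<Sum>k=0..CARD('n). \<Sum>l=0..CARD('n). \<Sum>j=1..J.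
        (1 / g j k l) * (a j * dotv (p1 P k) (p1 Q l) + b j * dotv (p0 P k) (p0 Q l)
                         + f j k l * rk P k * rk Q l))"

definition colsum :: "('n::finite \<Rightarrow> nat \<Rightarrow> real) \<Rightarrow> real^'n" where
  "colsum Q = (\<chi> i. \<Sum>k=1..CARD('n). Q i k)"

end

theory Submission
  imports Defs
begin

text \<open>
  For a distribution \<open>D\<close> on label vectors let its marginal matrix be
  \<open>p\<^sub>i\<^sub>k = D(Y\<^sub>i = 1, PP Y = k)\<close>. The metric is a bilinear function of the indicator features
  \<open>Y\<^sub>i [PP Y = k]\<close>, \<open>(1 - Y\<^sub>i) [PP Y = k]\<close>, \<open>[PP Y = k]\<close> of \<open>Y\<^sub>h\<close> and \<open>Y\<^sub>c\<close>, and the feature term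
  is linear in \<open>Y\<^sub>c\<close>, so their expectations depend on \<open>P\<close> and \<open>Q\<close> only through the marginal
  matrices; \<open>marginal_payoff\<close> is exactly this dependence. The marginal matrices of all
  distributions form precisely the set \<open>Delta\<close>: column \<open>k\<close> of a matrix in \<open>Delta\<close>, divided by
  \<open>r\<^sub>k\<close>, lies in the hypersimplex \<open>{x \<in> [0,1]\<^sup>n. \<Sum>x = k}\<close>, which is the convex hull of the
  0/1 vectors with exactly \<open>k\<close> ones (shift mass between two fractional coordinates and induct on
  the number of fractional coordinates). Hence the inner min-max over distributions equals the one
  over \<open>Delta\<close>; the term \<open>y \<bullet> \<Psi>\<^sup>T \<theta>\<close> is a constant that can be pulled out because the payoff
  is bounded.
\<close>

lemma finite_labels: "finite (labels :: (real^'n) set)"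
proof -
  have "labels \<subseteq> (\<lambda>S::'n set. \<chi> i. of_bool (i \<in> S)) ` UNIV"
  proof
    fix v :: "real^'n"
    assume "v \<in> labels"
    then have "v = (\<chi> i. of_bool (i \<in> {i. v $ i = 1}))"
      by (auto simp: labels_def vec_eq_iff)
    then show "v \<in> range (\<lambda>S::'n set. \<chi> i. of_bool (i \<in> S))"
      by blast
  qed
  then show ?thesis
    by (rule finite_subset) simp
qed

lemma labels_nth: "v \<in> labels \<Longrightarrow> v $ i = 0 \<or> v $ i = 1"
  by (auto simp: labels_def)

lemma labels_nth_nonneg: "v \<in> labels \<Longrightarrow> 0 \<le> v $ i"
  using labels_nth[of v i] by auto

lemma labels_nth_le_1: "v \<in> labels \<Longrightarrow> v $ i \<le> 1"
  using labels_nth[of v i] by auto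

lemma zero_in_labels: "0 \<in> labels"
  by (simp add: labels_def)

lemma labels_nth_eq_of_bool: "v \<in> labels \<Longrightarrow> v $ i = of_bool (v $ i = 1)"
  using labels_nth[of v i] by auto

lemma labels_one_minus_nth: "v \<in> labels \<Longrightarrow> 1 - v $ i = of_bool (v $ i = 0)"
  using labels_nth[of v i] by auto

lemma PP_le_card [simp]: "PP (v::real^'n) \<le> CARD('n)"
  unfolding PP_def by (rule card_mono) auto

lemma sum_of_bool_PP_mult:
  "(\<Sum>k=0..CARD('n). of_bool (PP (v::real^'n) = k) * h k) = (h (PP v) :: real)"
  by (simp add: Int_insert_right)

lemma sum_labels_nth: "v \<in> labels \<Longrightarrow> (\<Sum>i\<in>UNIV. v $ i) = real (PP v)"
  by (subst labels_nth_eq_of_bool) (simp_all add: PP_def)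

lemma TP_eq_sum:
  "u \<in> labels \<Longrightarrow> v \<in> labels \<Longrightarrow> real (TP u v) = (\<Sum>i\<in>UNIV. u $ i * v $ i)"
  by (subst (1 2) labels_nth_eq_of_bool) (simp_all add: TP_def flip: of_bool_conj)

lemma TN_eq_sum:
  "u \<in> labels \<Longrightarrow> v \<in> labels \<Longrightarrow> real (TN u v) = (\<Sum>i\<in>UNIV. (1 - u $ i) * (1 - v $ i))"
  by (simp add: labels_one_minus_nth TN_def flip: of_bool_conj)

lemma AP_eq_PP: "AP = PP"
  by (rule ext) (simp add: AP_def PP_def)

lemma distribs_nonneg: "D \<in> distribs \<Longrightarrow> 0 \<le> D v"
  by (simp add: distribs_def)

lemma distribs_sum_eq_1: "D \<in> distribs \<Longrightarrow> (\<Sum>v\<in>labels. D v) = 1"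
  by (simp add: distribs_def)

lemma distribs_support: "D \<in> distribs \<Longrightarrow> D v \<noteq> 0 \<Longrightarrow> v \<in> labels"
  by (auto simp: distribs_def)

lemma distribs_le_1:
  assumes "D \<in> distribs"
  shows "D v \<le> 1"
proof (cases "v \<in> labels")
  case True
  then have "D v \<le> (\<Sum>u\<in>labels. D u)"
    using assms finite_labels by (intro member_le_sum) (auto simp: distribs_nonneg)
  then show ?thesis
    using assms by (simp add: distribs_sum_eq_1)
next
  case False
  then show ?thesis
    using assms by (simp add: distribs_def)
qed

definition point_mass :: "real^'n \<Rightarrow> real^'n \<Rightarrow> real" where
  "point_mass u v = of_bool (v = u)"

lemma point_mass_distribs: "u \<in> labels \<Longrightarrow> point_mass u \<in> distribs"
  by (auto simp: distribs_def point_mass_def finite_labels)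

lemma sum_point_mass_mult: "u \<in> labels \<Longrightarrow> (\<Sum>v\<in>labels. point_mass u v * h v) = h u"
  by (simp add: point_mass_def finite_labels)

lemma expect2_cong:
  "(\<And>u v. u \<in> labels \<Longrightarrow> v \<in> labels \<Longrightarrow> h u v = h' u v) \<Longrightarrow> expect2 P Q h = expect2 P Q h'"
  by (simp add: expect2_def)

lemma expect2_add: "expect2 P Q (\<lambda>u v. h u v + h' u v) = expect2 P Q h + expect2 P Q h'"
  by (simp add: expect2_def distrib_left sum.distrib)

lemma expect2_diff: "expect2 P Q (\<lambda>u v. h u v - h' u v) = expect2 P Q h - expect2 P Q h'"
  by (simp add: expect2_def right_diff_distrib sum_subtractf)

lemma expect2_scale: "expect2 P Q (\<lambda>u v. c * h u v) = c * expect2 P Q h"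
  by (simp add: expect2_def sum_distrib_left mult_ac)

lemma expect2_sum: "expect2 P Q (\<lambda>u v. \<Sum>k\<in>K. h k u v) = (\<Sum>k\<in>K. expect2 P Q (h k))"
  unfolding expect2_def sum_distrib_left by (subst (1 2) sum.swap) simp

lemma expect2_mult:
  "expect2 P Q (\<lambda>u v. x u * z v) = (\<Sum>u\<in>labels. P u * x u) * (\<Sum>v\<in>labels. Q v * z v)"
  by (simp add: expect2_def sum_product mult_ac)

lemma expect2_right:
  "P \<in> distribs \<Longrightarrow> expect2 P Q (\<lambda>_ v. h v) = (\<Sum>v\<in>labels. Q v * h v)"
  by (simp add: expect2_def mult.assoc distribs_sum_eq_1 flip: sum_distrib_left sum_distrib_right)

lemma expect2_abs_le:
  assumes "P \<in> distribs" "Q \<in> distribs"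
  shows "\<bar>expect2 P Q h\<bar> \<le> (\<Sum>u\<in>labels. \<Sum>v\<in>labels. \<bar>h u v\<bar>)"
proof -
  have "\<bar>expect2 P Q h\<bar> \<le> (\<Sum>u\<in>labels. \<Sum>v\<in>labels. \<bar>P u * Q v * h u v\<bar>)"
    unfolding expect2_def by (rule order_trans[OF sum_abs sum_mono]) (rule sum_abs)
  also have "\<dots> \<le> (\<Sum>u\<in>labels. \<Sum>v\<in>labels. \<bar>h u v\<bar>)"
    using assms
    by (intro sum_mono)
      (simp add: abs_mult distribs_nonneg distribs_le_1 mult_le_one mult_left_le_one_le)
  finally show ?thesis .
qed

lemma dotv_expect2:
  "dotv (\<lambda>i. \<Sum>u\<in>labels. P u * x u i) (\<lambda>i. \<Sum>v\<in>labels. Q v * z v i)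
     = expect2 P Q (\<lambda>u v. dotv (x u) (z v))"
  by (simp add: dotv_def expect2_sum flip: expect2_mult)

section \<open>The marginal matrix of a distribution\<close>

definition marginal_matrix :: "(real^'n \<Rightarrow> real) \<Rightarrow> 'n \<Rightarrow> nat \<Rightarrow> real" where
  "marginal_matrix D i k = (\<Sum>v\<in>labels. D v * (v $ i * of_bool (PP v = k)))"

lemma sum_marginal_matrix:
  fixes D :: "real^'n \<Rightarrow> real"
  shows "(\<Sum>i\<in>UNIV. marginal_matrix D i k) = real k * (\<Sum>v\<in>labels. D v * of_bool (PP v = k))"
proof -
  have "(\<Sum>i\<in>UNIV. marginal_matrix D i k)
      = (\<Sum>v\<in>labels. D v * of_bool (PP v = k) * (\<Sum>i\<in>UNIV. v $ i))"
    unfolding marginal_matrix_def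
    by (subst sum.swap) (intro sum.cong refl, simp only: sum_distrib_left sum_distrib_right mult_ac)
  also have "\<dots> = (\<Sum>v\<in>labels. real k * (D v * of_bool (PP v = k)))"
    by (intro sum.cong) (auto simp: sum_labels_nth)
  finally show ?thesis
    by (simp add: sum_distrib_left)
qed

lemma marginal_matrix_col_0: "marginal_matrix D (i::'n::finite) 0 = 0"
proof -
  have "v $ i * of_bool (PP v = 0) = 0" if "v \<in> labels" for v :: "real^'n"
    using that labels_nth[OF that, of i] by (auto simp: PP_def)
  then show ?thesis
    unfolding marginal_matrix_def by (intro sum.neutral) simp
qed

lemma marginal_matrix_col_gt_card:
  assumes "CARD('n) < k"
  shows "marginal_matrix D (i::'n::finite) k = 0"
proof -
  have "PP v \<noteq> k" for v :: "real^'n"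
    using PP_le_card[of v] assms by linarith
  then show ?thesis
    by (simp add: marginal_matrix_def)
qed

lemma rk_marginal_matrix:
  fixes D :: "real^'n \<Rightarrow> real"
  assumes "D \<in> distribs"
  shows "rk (marginal_matrix D) k = (\<Sum>v\<in>labels. D v * of_bool (PP v = k))"
proof (cases "k = 0")
  case True
  have "(\<Sum>k=0..CARD('n). \<Sum>v\<in>labels. D v * of_bool (PP v = k)) = (1::real)"
    using assms
    by (subst sum.swap) (simp add: Int_insert_right distribs_sum_eq_1)
  then show ?thesis
    using True by (simp add: rk_def sum_marginal_matrix sum.atLeast_Suc_atMost)
qed (simp add: rk_def sum_marginal_matrix)

lemma p1_marginal_matrix: "p1 (marginal_matrix D) k i = marginal_matrix D i k"
  by (simp add: p1_def marginal_matrix_col_0)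

lemma p0_marginal_matrix:
  fixes D :: "real^'n \<Rightarrow> real"
  assumes "D \<in> distribs"
  shows "p0 (marginal_matrix D) k i = (\<Sum>v\<in>labels. D v * ((1 - v $ i) * of_bool (PP v = k)))"
  by (simp add: p0_def p1_marginal_matrix rk_marginal_matrix[OF assms] marginal_matrix_def
      algebra_simps flip: sum_subtractf)

lemma colsum_marginal_matrix:
  fixes D :: "real^'n \<Rightarrow> real"
  shows "colsum (marginal_matrix D) = (\<Sum>v\<in>labels. D v *\<^sub>R v)"
proof -
  have "colsum (marginal_matrix D) $ i = (\<Sum>v\<in>labels. D v * v $ i)" for i
  proof -
    have "colsum (marginal_matrix D) $ i = (\<Sum>k=0..CARD('n). marginal_matrix D i k)"
      by (simp add: colsum_def sum.atLeast_Suc_atMost marginal_matrix_col_0)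
    also have "\<dots> = (\<Sum>v\<in>labels. D v * v $ i)"
      unfolding marginal_matrix_def by (subst sum.swap) (simp add: Int_insert_right flip: mult.assoc)
    finally show ?thesis .
  qed
  then show ?thesis
    by (simp add: vec_eq_iff sum_component)
qed

lemma marginal_matrix_in_Delta:
  fixes D :: "real^'n \<Rightarrow> real"
  assumes "D \<in> distribs"
  shows "marginal_matrix D \<in> Delta"
proof -
  let ?r = "\<lambda>k. \<Sum>v\<in>labels. D v * of_bool (PP v = k)"
  have nonneg: "0 \<le> marginal_matrix D i k" for i k
    unfolding marginal_matrix_def using assms
    by (intro sum_nonneg mult_nonneg_nonneg) (simp_all add: distribs_nonneg labels_nth_nonneg)
  have outside: "marginal_matrix D i k = 0" if "k \<notin> {1..CARD('n)}" for i k
    using that by (cases "k = 0") (auto simp: marginal_matrix_col_0 marginal_matrix_col_gt_card)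
  have "marginal_matrix D i k \<le> ?r k" for i k
    unfolding marginal_matrix_def using assms
    by (intro sum_mono) (simp add: distribs_nonneg labels_nth_le_1 mult_left_le)
  then have col_bound: "marginal_matrix D i k \<le> 1 / real k * (\<Sum>j\<in>UNIV. marginal_matrix D j k)"
    if "k \<in> {1..CARD('n)}" for i k
    using that by (simp add: sum_marginal_matrix)
  have "(\<Sum>k=1..CARD('n). 1 / real k * (\<Sum>i\<in>UNIV. marginal_matrix D i k)) = 1 - rk (marginal_matrix D) 0"
    by (simp add: rk_def)
  also have "\<dots> \<le> 1"
    using assms by (simp add: rk_marginal_matrix distribs_nonneg sum_nonneg)
  finally show ?thesis
    using nonneg outside col_bound unfolding Delta_def by blast
qed

lemma marginal_matrix_point_mass:
  "u \<in> labels \<Longrightarrow> marginal_matrix (point_mass u) i k = u $ i * of_bool (PP u = k)"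
  by (simp add: marginal_matrix_def sum_point_mass_mult)

lemma p1_marginal_matrix_mixture:
  "p1 (marginal_matrix D) k = (\<lambda>i. \<Sum>u\<in>labels. D u * p1 (marginal_matrix (point_mass u)) k i)"
  by (rule ext) (simp add: p1_marginal_matrix marginal_matrix_point_mass cong: sum.cong,
      simp add: marginal_matrix_def)

lemma p0_marginal_matrix_mixture:
  assumes "D \<in> distribs"
  shows "p0 (marginal_matrix D) k = (\<lambda>i. \<Sum>u\<in>labels. D u * p0 (marginal_matrix (point_mass u)) k i)"
  using assms by (intro ext) (simp add: p0_marginal_matrix point_mass_distribs sum_point_mass_mult cong: sum.cong)

lemma rk_marginal_matrix_mixture:
  assumes "D \<in> distribs"
  shows "rk (marginal_matrix D) k = (\<Sum>u\<in>labels. D u * rk (marginal_matrix (point_mass u)) k)"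
  using assms by (simp add: rk_marginal_matrix point_mass_distribs sum_point_mass_mult cong: sum.cong)

lemma marginal_features_point_mass:
  fixes u :: "real^'n"
  assumes "u \<in> labels"
  shows "p1 (marginal_matrix (point_mass u)) k = (\<lambda>i. of_bool (PP u = k) * u $ i)"
    and "p0 (marginal_matrix (point_mass u)) k = (\<lambda>i. of_bool (PP u = k) * (1 - u $ i))"
    and "rk (marginal_matrix (point_mass u)) k = of_bool (PP u = k)"
  using assms
  by (simp_all add: fun_eq_iff p1_marginal_matrix marginal_matrix_point_mass p0_marginal_matrix
      rk_marginal_matrix point_mass_distribs sum_point_mass_mult mult.commute)

section \<open>Vertices of the hypersimplex\<close>

definition hypersimplex :: "nat \<Rightarrow> (real^'n) set" where
  "hypersimplex k = {x \<in> cbox 0 1. (\<Sum>i\<in>UNIV. x $ i) = real k}"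

definition fractional_coords :: "real^'n \<Rightarrow> 'n set" where
  "fractional_coords x = {i. 0 < x $ i \<and> x $ i < 1}"

lemma hypersimplex_nth: "x \<in> hypersimplex k \<Longrightarrow> 0 \<le> x $ i \<and> x $ i \<le> 1"
  by (simp add: hypersimplex_def mem_box_cart)

lemma fractional_coords_not_singleton:
  assumes x: "x \<in> hypersimplex k" and a: "a \<in> fractional_coords x"
  shows "\<exists>b. b \<noteq> a \<and> b \<in> fractional_coords x"
proof (rule ccontr)
  assume no_other: "\<not> (\<exists>b. b \<noteq> a \<and> b \<in> fractional_coords x)"
  have "x $ i = of_bool (x $ i = 1)" if "i \<noteq> a" for i
  proof -
    have "i \<notin> fractional_coords x"
      using that no_other by blast
    then show ?thesis
      using hypersimplex_nth[OF x, of i] by (auto simp: fractional_coords_def)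
  qed
  then have "(\<Sum>i\<in>UNIV - {a}. x $ i) = (\<Sum>i\<in>UNIV - {a}. of_bool (x $ i = 1))"
    by (intro sum.cong) auto
  also have "\<dots> = real (card ((UNIV - {a}) \<inter> {i. x $ i = 1}))"
    by simp
  finally have "(\<Sum>i\<in>UNIV - {a}. x $ i) = real (card ((UNIV - {a}) \<inter> {i. x $ i = 1}))" .
  moreover have "(\<Sum>i\<in>UNIV. x $ i) = x $ a + (\<Sum>i\<in>UNIV - {a}. x $ i)"
    by (simp add: sum.remove)
  ultimately have "x $ a = real k - real (card ((UNIV - {a}) \<inter> {i. x $ i = 1}))"
    using x by (simp add: hypersimplex_def)
  then have "card ((UNIV - {a}) \<inter> {i. x $ i = 1}) < k"
    and "k < card ((UNIV - {a}) \<inter> {i. x $ i = 1}) + 1"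
    using a by (auto simp: fractional_coords_def)
  then show False
    by linarith
qed

lemma hypersimplex_shift:
  assumes x: "x \<in> hypersimplex k"
    and a: "a \<in> fractional_coords x" and b: "b \<in> fractional_coords x" and "a \<noteq> b"
  obtains e where "0 < e"
    and "x + e *\<^sub>R (axis a 1 - axis b 1) \<in> hypersimplex k"
    and "fractional_coords (x + e *\<^sub>R (axis a 1 - axis b 1)) \<subset> fractional_coords x"
proof -
  define e where "e = min (1 - x $ a) (x $ b)"
  define y where "y = x + e *\<^sub>R (axis a 1 - axis b 1)"
  have y_nth: "y $ i = x $ i + e * (of_bool (i = a) - of_bool (i = b))" for i
    by (simp add: y_def axis_def)
  have "0 < e"
    using a b by (simp add: e_def fractional_coords_def)
  have "(\<Sum>i\<in>UNIV. y $ i) = (\<Sum>i\<in>UNIV. x $ i)"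
    unfolding y_nth by (simp add: sum.distrib sum_subtractf flip: sum_distrib_left)
  moreover have "0 \<le> y $ i \<and> y $ i \<le> 1" for i
    unfolding y_nth using hypersimplex_nth[OF x, of i] a b \<open>a \<noteq> b\<close>
    by (auto simp: e_def fractional_coords_def)
  ultimately have "y \<in> hypersimplex k"
    using x by (simp add: hypersimplex_def mem_box_cart)
  have "fractional_coords y \<subseteq> fractional_coords x"
  proof
    fix i
    assume "i \<in> fractional_coords y"
    then show "i \<in> fractional_coords x"
      using a b by (cases "i = a \<or> i = b") (auto simp: fractional_coords_def y_nth)
  qed
  moreover have "y $ a = 1 \<or> y $ b = 0"
    unfolding y_nth using \<open>a \<noteq> b\<close> by (auto simp: e_def min_def)
  then have "a \<notin> fractional_coords y \<or> b \<notin> fractional_coords y"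
    by (auto simp: fractional_coords_def)
  ultimately have "fractional_coords y \<subset> fractional_coords x"
    using a b by blast
  with \<open>0 < e\<close> \<open>y \<in> hypersimplex k\<close> show ?thesis
    using that unfolding y_def by blast
qed

lemma hypersimplex_subset_convex_hull: "hypersimplex k \<subseteq> convex hull {v \<in> labels. PP v = k}"
proof
  fix x :: "real^'n"
  assume "x \<in> hypersimplex k"
  then show "x \<in> convex hull {v \<in> labels. PP v = k}"
  proof (induction "card (fractional_coords x)" arbitrary: x rule: less_induct)
    case less
    show ?case
    proof (cases "fractional_coords x = {}")
      case True
      have "x $ i = 0 \<or> x $ i = 1" for i
      proof -
        have "i \<notin> fractional_coords x"
          using True by blast
        then show ?thesis
          using hypersimplex_nth[OF less.prems, of i] by (auto simp: fractional_coords_def)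
      qed
      then have "x \<in> labels"
        by (simp add: labels_def)
      moreover have "PP x = k"
        using less.prems sum_labels_nth[OF \<open>x \<in> labels\<close>] by (simp add: hypersimplex_def)
      ultimately show ?thesis
        by (intro hull_inc) simp
    next
      case False
      then obtain a where a: "a \<in> fractional_coords x"
        by blast
      then obtain b where b: "b \<in> fractional_coords x" "a \<noteq> b"
        using fractional_coords_not_singleton[OF less.prems] by metis
      obtain e where e: "0 < e" "x + e *\<^sub>R (axis a 1 - axis b 1) \<in> hypersimplex k"
        "fractional_coords (x + e *\<^sub>R (axis a 1 - axis b 1)) \<subset> fractional_coords x"
        using hypersimplex_shift[OF less.prems a b] .
      obtain e' where e': "0 < e'" "x + e' *\<^sub>R (axis b 1 - axis a 1) \<in> hypersimplex k"
        "fractional_coords (x + e' *\<^sub>R (axis b 1 - axis a 1)) \<subset> fractional_coords x"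
        using hypersimplex_shift[OF less.prems b(1) a] b(2) by metis
      let ?S = "convex hull {v \<in> labels. PP v = k}"
      define t where "t = axis a 1 - axis b (1::real)"
      have "x + e *\<^sub>R t \<in> ?S" "x + e' *\<^sub>R (- t) \<in> ?S"
        using less.hyps e e' by (simp_all add: t_def psubset_card_mono)
      then have "(e' / (e + e')) *\<^sub>R (x + e *\<^sub>R t) + (e / (e + e')) *\<^sub>R (x + e' *\<^sub>R (- t)) \<in> ?S"
        using e(1) e'(1) by (intro convexD[OF convex_convex_hull]) (simp_all flip: add_divide_distrib)
      also have "(e' / (e + e')) *\<^sub>R (x + e *\<^sub>R t) + (e / (e + e')) *\<^sub>R (x + e' *\<^sub>R (- t)) = x"
        using e(1) e'(1) by (simp add: algebra_simps flip: scaleR_add_left add_divide_distrib)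
      finally show ?thesis .
    qed
  qed
qed

lemma convex_hull_level_set_distrib:
  fixes x :: "real^'n"
  assumes "x \<in> convex hull {v \<in> labels. PP v = k}"
  obtains D where "D \<in> distribs" "\<And>v. D v \<noteq> 0 \<Longrightarrow> PP v = k" "(\<Sum>v\<in>labels. D v *\<^sub>R v) = x"
proof -
  let ?S = "{v \<in> labels. PP v = k}"
  have "finite ?S"
    by (simp add: finite_labels)
  then obtain u where u: "\<forall>v\<in>?S. 0 \<le> u v" "sum u ?S = 1" "(\<Sum>v\<in>?S. u v *\<^sub>R v) = x"
    using assms convex_hull_finite[OF \<open>finite ?S\<close>] by blast
  define D where "D v = (if v \<in> ?S then u v else 0)" for v
  have "(\<Sum>v\<in>labels. D v) = 1" "(\<Sum>v\<in>labels. D v *\<^sub>R v) = x"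
    using u by (simp_all add: D_def sum.inter_filter[OF finite_labels, symmetric] if_distrib[of "\<lambda>c. c *\<^sub>R _"] cong: if_cong)
  then have "D \<in> distribs"
    using u by (auto simp: distribs_def D_def)
  moreover have "D v \<noteq> 0 \<Longrightarrow> PP v = k" for v
    by (simp add: D_def split: if_splits)
  ultimately show ?thesis
    using that \<open>(\<Sum>v\<in>labels. D v *\<^sub>R v) = x\<close> by blast
qed

section \<open>Every matrix in Delta is a marginal matrix\<close>

lemma Delta_outside_eq_0:
  fixes P :: "'n::finite \<Rightarrow> nat \<Rightarrow> real"
  shows "P \<in> Delta \<Longrightarrow> k \<notin> {1..CARD('n)} \<Longrightarrow> P i k = 0"
  by (simp add: Delta_def)

lemma sum_rk: "(\<Sum>k=0..CARD('n). rk (P :: 'n::finite \<Rightarrow> nat \<Rightarrow> real) k) = 1"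
  by (simp add: rk_def sum.atLeast_Suc_atMost)

lemma Delta_rk_nonneg:
  fixes P :: "'n::finite \<Rightarrow> nat \<Rightarrow> real"
  assumes "P \<in> Delta"
  shows "0 \<le> rk P k"
  using assms by (auto simp: Delta_def rk_def intro!: divide_nonneg_nonneg sum_nonneg)

lemma Delta_le_rk:
  fixes P :: "'n::finite \<Rightarrow> nat \<Rightarrow> real"
  assumes "P \<in> Delta" "k \<noteq> 0"
  shows "P i k \<le> rk P k"
  using assms by (cases "k \<le> CARD('n)") (auto simp: Delta_def rk_def)

lemma Delta_column_in_hypersimplex:
  fixes P :: "'n::finite \<Rightarrow> nat \<Rightarrow> real"
  assumes P: "P \<in> Delta" and "k \<noteq> 0" and "rk P k \<noteq> 0"
  shows "(\<chi> i. P i k / rk P k) \<in> hypersimplex k"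
proof -
  have "0 < rk P k"
    using Delta_rk_nonneg[OF P] \<open>rk P k \<noteq> 0\<close> by (simp add: order_less_le)
  moreover have "(\<Sum>i\<in>UNIV. P i k) = real k * rk P k"
    using \<open>k \<noteq> 0\<close> by (simp add: rk_def)
  ultimately show ?thesis
    using P Delta_le_rk[OF P \<open>k \<noteq> 0\<close>] \<open>k \<noteq> 0\<close>
    by (auto simp: hypersimplex_def mem_box_cart Delta_def simp flip: sum_divide_distrib)
qed

text \<open>\<open>E\<close> plays the role of the restriction of a distribution with marginal matrix \<open>P\<close> to the
  event \<open>PP Y = k\<close>.\<close>

definition column_measure :: "('n::finite \<Rightarrow> nat \<Rightarrow> real) \<Rightarrow> nat \<Rightarrow> (real^'n \<Rightarrow> real) \<Rightarrow> bool" where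
  "column_measure P k E \<longleftrightarrow> (\<forall>v. 0 \<le> E v) \<and> (\<forall>v. E v \<noteq> 0 \<longrightarrow> v \<in> labels \<and> PP v = k)
     \<and> (\<Sum>v\<in>labels. E v) = rk P k \<and> (\<forall>i. (\<Sum>v\<in>labels. E v * v $ i) = P i k)"

lemma Delta_column_measure_exists:
  fixes P :: "'n::finite \<Rightarrow> nat \<Rightarrow> real"
  assumes P: "P \<in> Delta"
  shows "\<exists>E. column_measure P k E"
proof -
  consider "k = 0" | "k \<noteq> 0" "rk P k = 0" | "k \<noteq> 0" "rk P k \<noteq> 0"
    by blast
  then show ?thesis
  proof cases
    case 1
    have "column_measure P 0 (\<lambda>v. rk P 0 * point_mass 0 v)"
      unfolding column_measure_def
    proof (intro conjI allI impI)
      show "0 \<le> rk P 0 * point_mass 0 v" for v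
        using Delta_rk_nonneg[OF P] by (simp add: point_mass_def)
      show "v \<in> labels" "PP v = 0" if "rk P 0 * point_mass 0 v \<noteq> 0" for v
        using that by (simp_all add: point_mass_def zero_in_labels PP_def)
      show "(\<Sum>v\<in>labels. rk P 0 * point_mass 0 v) = rk P 0"
        by (simp add: point_mass_def zero_in_labels finite_labels)
      have "(\<Sum>v\<in>labels. rk P 0 * point_mass 0 v * v $ i) = 0" for i
        by (intro sum.neutral) (simp add: point_mass_def)
      then show "(\<Sum>v\<in>labels. rk P 0 * point_mass 0 v * v $ i) = P i 0" for i
        using Delta_outside_eq_0[OF P, of 0 i] by simp
    qed
    with 1 show ?thesis
      by blast
  next
    case 2
    have "P i k \<le> 0" for i
      using Delta_le_rk[OF P 2(1), of i] 2(2) by simp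
    moreover have "0 \<le> P i k" for i
      using P by (simp add: Delta_def)
    ultimately have "P i k = 0" for i
      by (rule order_antisym)
    then have "column_measure P k (\<lambda>_. 0)"
      using 2 by (simp add: column_measure_def)
    then show ?thesis
      by blast
  next
    case 3
    have "(\<chi> i. P i k / rk P k) \<in> convex hull {v \<in> labels. PP v = k}"
      using Delta_column_in_hypersimplex[OF P 3] hypersimplex_subset_convex_hull by blast
    then obtain D where D: "D \<in> distribs" "\<And>v. D v \<noteq> 0 \<Longrightarrow> PP v = k"
      "(\<Sum>v\<in>labels. D v *\<^sub>R v) = (\<chi> i. P i k / rk P k)"
      by (rule convex_hull_level_set_distrib) blast
    have "column_measure P k (\<lambda>v. rk P k * D v)"
      unfolding column_measure_def
    proof (intro conjI allI impI)
      show "0 \<le> rk P k * D v" for v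
        using D(1) Delta_rk_nonneg[OF P] by (simp add: distribs_nonneg)
      show "v \<in> labels" "PP v = k" if "rk P k * D v \<noteq> 0" for v
        using that D(1,2) distribs_support by auto
      show "(\<Sum>v\<in>labels. rk P k * D v) = rk P k"
        using D(1) by (simp add: distribs_sum_eq_1 flip: sum_distrib_left)
      have "(\<Sum>v\<in>labels. D v * v $ i) = P i k / rk P k" for i
        using arg_cong[OF D(3), of "\<lambda>x. x $ i"] by (simp add: sum_component)
      then show "(\<Sum>v\<in>labels. rk P k * D v * v $ i) = P i k" for i
        using 3 by (simp add: mult.assoc flip: sum_distrib_left)
    qed
    then show ?thesis
      by blast
  qed
qed

lemma Delta_subset_marginal_matrix_image:
  fixes P :: "'n::finite \<Rightarrow> nat \<Rightarrow> real"
  assumes P: "P \<in> Delta"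
  obtains D :: "real^'n \<Rightarrow> real" where "D \<in> distribs" "marginal_matrix D = P"
proof -
  obtain E where "\<forall>k. column_measure P k (E k)"
    using choice[of "column_measure P"] Delta_column_measure_exists[OF P] by blast
  then have E_nonneg: "\<And>k v. 0 \<le> E k v"
    and E_support: "\<And>k v. E k v \<noteq> 0 \<Longrightarrow> v \<in> labels \<and> PP v = k"
    and E_mass: "\<And>k. (\<Sum>v\<in>labels. E k v) = rk P k"
    and E_moments: "\<And>k i. (\<Sum>v\<in>labels. E k v * v $ i) = P i k"
    by (simp_all add: column_measure_def)
  define D where "D v = (\<Sum>k=0..CARD('n). E k v)" for v
  have "(\<Sum>v\<in>labels. D v) = 1"
    unfolding D_def by (subst sum.swap) (simp add: E_mass sum_rk)
  moreover have "D v = 0" if "v \<notin> labels" for v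
    using that E_support by (auto simp: D_def intro: sum.neutral)
  ultimately have "D \<in> distribs"
    by (simp add: distribs_def D_def E_nonneg sum_nonneg)
  moreover have "marginal_matrix D i l = P i l" for i l
  proof -
    have E_level: "E k v * (v $ i * of_bool (PP v = l)) = of_bool (k = l) * (E k v * v $ i)" for k v
      using E_support[of k v] by auto
    have "marginal_matrix D i l
        = (\<Sum>k=0..CARD('n). \<Sum>v\<in>labels. of_bool (k = l) * (E k v * v $ i))"
      unfolding marginal_matrix_def D_def sum_distrib_right by (subst sum.swap) (simp only: E_level)
    also have "\<dots> = (\<Sum>k=0..CARD('n). of_bool (k = l) * P i k)"
      by (simp add: E_moments flip: sum_distrib_left)
    also have "\<dots> = P i l"
      using Delta_outside_eq_0[OF P, of l] by (cases "l \<le> CARD('n)") (simp_all add: Int_insert_right)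
    finally show ?thesis .
  qed
  ultimately show ?thesis
    using that by blast
qed

lemma marginal_matrix_image: "marginal_matrix ` (distribs :: (real^'n \<Rightarrow> real) set) = Delta"
proof
  show "Delta \<subseteq> marginal_matrix ` distribs"
    by (metis Delta_subset_marginal_matrix_image image_eqI subsetI)
qed (auto simp: marginal_matrix_in_Delta)

section \<open>The payoff in terms of marginal matrices\<close>

lemma marginal_payoff_marginal_matrix:
  assumes P: "P \<in> distribs" and Q: "Q \<in> distribs"
  shows "marginal_payoff J a b f g (marginal_matrix P) (marginal_matrix Q)
    = expect2 P Q (\<lambda>u v. marginal_payoff J a b f g
        (marginal_matrix (point_mass u)) (marginal_matrix (point_mass v)))"
  unfolding marginal_payoff_def p1_marginal_matrix_mixture[of P] p1_marginal_matrix_mixture[of Q]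
    p0_marginal_matrix_mixture[OF P] p0_marginal_matrix_mixture[OF Q]
    rk_marginal_matrix_mixture[OF P] rk_marginal_matrix_mixture[OF Q]
    dotv_expect2 mult.assoc[of "f _ _ _"] expect2_mult[symmetric]
  by (simp only: expect2_sum expect2_add expect2_scale)

lemma marginal_payoff_point_mass:
  fixes u v :: "real^'n"
  assumes u: "u \<in> labels" and v: "v \<in> labels"
  shows "marginal_payoff J a b f g (marginal_matrix (point_mass u)) (marginal_matrix (point_mass v))
    = metric J a b f g u v"
proof -
  let ?G = "\<lambda>k l. \<Sum>j=1..J. (a j * real (TP u v) + b j * real (TN u v) + f j k l) / g j k l"
  have "marginal_payoff J a b f g (marginal_matrix (point_mass u)) (marginal_matrix (point_mass v))
      = (\<Sum>k=0..CARD('n). \<Sum>l=0..CARD('n). of_bool (PP u = k) * (of_bool (PP v = l) * ?G k l))"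
    unfolding marginal_payoff_def marginal_features_point_mass[OF u] marginal_features_point_mass[OF v]
      dotv_def TP_eq_sum[OF u v] TN_eq_sum[OF u v]
    by (intro sum.cong refl) (auto simp: of_bool_def)
  also have "\<dots> = ?G (PP u) (PP v)"
    by (simp only: sum_of_bool_PP_mult flip: sum_distrib_left)
  finally show ?thesis
    by (simp add: metric_def AP_eq_PP)
qed

lemma expect2_metric:
  assumes "P \<in> distribs" "Q \<in> distribs"
  shows "expect2 P Q (metric J a b f g)
    = marginal_payoff J a b f g (marginal_matrix P) (marginal_matrix Q)"
  unfolding marginal_payoff_marginal_matrix[OF assms]
  by (rule expect2_cong) (simp add: marginal_payoff_point_mass)

lemma expect2_feature_shift:
  fixes Psi :: "real^'n^'m" and y :: "real^'n"
  assumes "P \<in> distribs" "Q \<in> distribs"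
  shows "expect2 P Q (\<lambda>_ yc. \<theta> \<bullet> (Psi *v yc - Psi *v y))
    = colsum (marginal_matrix Q) \<bullet> (transpose Psi *v \<theta>) - y \<bullet> (transpose Psi *v \<theta>)"
proof -
  let ?w = "transpose Psi *v \<theta>"
  have "\<theta> \<bullet> (Psi *v yc - Psi *v y) = ?w \<bullet> yc - ?w \<bullet> y" for yc
    by (simp add: inner_diff_right transpose_matrix_vector dot_lmul_matrix)
  then have "expect2 P Q (\<lambda>_ yc. \<theta> \<bullet> (Psi *v yc - Psi *v y))
      = (\<Sum>v\<in>labels. Q v * (?w \<bullet> v)) - (\<Sum>v\<in>labels. Q v) * (?w \<bullet> y)"
    using assms(1) by (simp add: expect2_right right_diff_distrib sum_subtractf sum_distrib_right)
  also have "\<dots> = ?w \<bullet> colsum (marginal_matrix Q) - ?w \<bullet> y"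
    using assms(2)
    by (simp add: colsum_marginal_matrix distribs_sum_eq_1 inner_sum_right mult.commute)
  finally show ?thesis
    by (simp add: inner_commute)
qed

lemma INF_SUP_add_const:
  fixes G :: "'a \<Rightarrow> 'b \<Rightarrow> real"
  assumes "A \<noteq> {}" "B \<noteq> {}" and bound: "\<And>x y. x \<in> A \<Longrightarrow> y \<in> B \<Longrightarrow> \<bar>G x y\<bar> \<le> M"
  shows "(INF y\<in>B. SUP x\<in>A. c + G x y) = c + (INF y\<in>B. SUP x\<in>A. G x y)"
proof -
  have bdd: "bdd_above ((\<lambda>x. G x y) ` A)" if "y \<in> B" for y
    using bound that by (intro bdd_aboveI2[where M = M]) (simp add: abs_le_iff)
  obtain x0 where "x0 \<in> A"
    using \<open>A \<noteq> {}\<close> by blast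
  have "- M \<le> (SUP x\<in>A. G x y)" if "y \<in> B" for y
    using bound[OF \<open>x0 \<in> A\<close> that] cSUP_upper[OF \<open>x0 \<in> A\<close> bdd[OF that]] by linarith
  then have "bdd_below ((\<lambda>y. SUP x\<in>A. G x y) ` B)"
    by (intro bdd_belowI2[where m = "- M"])
  moreover have "(SUP x\<in>A. c + G x y) = c + (SUP x\<in>A. G x y)" if "y \<in> B" for y
    using Sup_add_eq[OF bdd[OF that] \<open>A \<noteq> {}\<close>] .
  ultimately show ?thesis
    using Inf_add_eq[OF _ \<open>B \<noteq> {}\<close>] by (simp cong: INF_cong)
qed

text \<open>Neither hypothesis is needed: the feature term is affine in \<open>y\<close> whether or not \<open>y\<close> is a
  label vector, and a vanishing \<open>g j k l\<close> gives the junk value \<open>x / 0 = 0\<close> on both sides alike.\<close>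

theorem theorem2:
  fixes y :: "real^'n"
    and Psi :: "real^'n^'m"
    and J :: nat
    and a b :: "nat \<Rightarrow> real"
    and f g :: "nat \<Rightarrow> nat \<Rightarrow> nat \<Rightarrow> real"
  assumes y_lab: "y \<in> labels"
    and g_nz: "\<And>j k l. j \<in> {1..J} \<Longrightarrow> k \<le> CARD('n) \<Longrightarrow> l \<le> CARD('n) \<Longrightarrow> g j k l \<noteq> 0"
  shows
    "(SUP \<theta>\<in>(UNIV :: (real^'m) set). INF Q\<in>distribs. SUP P\<in>distribs.
        expect2 P Q (\<lambda>yh yc. metric J a b f g yh yc - \<theta> \<bullet> (Psi *v yc - Psi *v y)))
     = (SUP \<theta>\<in>(UNIV :: (real^'m) set).
          (INF Q\<in>Delta. SUP P\<in>Delta.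
             marginal_payoff J a b f g P Q - colsum Q \<bullet> (transpose Psi *v \<theta>))
          + y \<bullet> (transpose Psi *v \<theta>))"
proof (rule SUP_cong[OF refl])
  fix \<theta> :: "real^'m"
  define H where "H yh yc = metric J a b f g yh yc - \<theta> \<bullet> (Psi *v yc - Psi *v y)" for yh yc
  define c where "c = y \<bullet> (transpose Psi *v \<theta>)"
  define G where "G P Q = marginal_payoff J a b f g P Q - colsum Q \<bullet> (transpose Psi *v \<theta>)" for P Q
  have expect: "expect2 P Q H = c + G (marginal_matrix P) (marginal_matrix Q)"
    if "P \<in> distribs" "Q \<in> distribs" for P Q
    using that unfolding H_def G_def c_def expect2_diff
    by (simp add: expect2_metric expect2_feature_shift)
  have "\<bar>G (marginal_matrix P) (marginal_matrix Q)\<bar> \<le> (\<Sum>u\<in>labels. \<Sum>v\<in>labels. \<bar>H u v\<bar>) + \<bar>c\<bar>"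
    if "P \<in> distribs" "Q \<in> distribs" for P Q
    using expect2_abs_le[OF that, of H] expect[OF that] by linarith
  moreover have "(distribs :: (real^'n \<Rightarrow> real) set) \<noteq> {}"
    using point_mass_distribs[OF zero_in_labels] by blast
  ultimately have "(INF Q\<in>distribs. SUP P\<in>distribs. c + G (marginal_matrix P) (marginal_matrix Q))
      = c + (INF Q\<in>distribs. SUP P\<in>distribs. G (marginal_matrix P) (marginal_matrix Q))"
    by (intro INF_SUP_add_const)
  then have "(INF Q\<in>distribs. SUP P\<in>distribs. expect2 P Q H)
      = c + (INF Q\<in>distribs. SUP P\<in>distribs. G (marginal_matrix P) (marginal_matrix Q))"
    by (simp add: expect cong: INF_cong SUP_cong)
  also have "\<dots> = c + (INF Q\<in>Delta. SUP P\<in>Delta. G P Q)"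
    by (simp add: image_image flip: marginal_matrix_image)
  finally show "(INF Q\<in>distribs. SUP P\<in>distribs. expect2 P Q H)
      = (INF Q\<in>Delta. SUP P\<in>Delta. G P Q) + c"
    by simp
qed

end
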